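(* Let $\alpha\in\mathbb{C}$ and let $r_1,r_2$ be positive real numbers with $0<r_1<2r_2-r_1$. Put $B_{r_1,r_2}=\{(z,w)\in\mathbb{C}^2 : |z|<2r_1,\ |2w-z-\alpha|<2r_2\}$. Let $g(z,w)$ be holomorphic on an open subset of $\mathbb{C}^2$ containing $B_{r_1,r_2}$, and set $f(z,w)=\frac{g(z,w)}{2w-z-\alpha}$. For $j=0,1,2,\dots$ let \[ I_j=\frac{1}{(2\pi\sqrt{-1})^2}\oint_{C_0}\frac{dz}{z}\oint_{C_{\frac{z+\alpha}{2}}}dw\, f(z,w)\left(\frac{w-z}{z}\right)^j . \] Then there is a constant $r>0$ such that for all $\varepsilon\in\mathbb{C}$ with $|\varepsilon|<r$, \[ \sum_{j=0}^{\infty} I_j\,\varepsilon^j=\frac{1}{2+\varepsilon}\cdot\frac{1}{2\pi\sqrt{-1}}\oint_{C_{\frac{1+\varepsilon}{2+\varepsilon}\alpha}}dw\,\frac{g\left(\frac{\varepsilon}{1+\varepsilon}w,\,w\right)}{w-\frac{1+\varepsilon}{2+\varepsilon}\alpha}. \] In particular, the generating function $F(\varepsilon)=\sum_{j\ge0}I_j\varepsilon^j$ is holomorphic at $\varepsilon=0$.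
   Context: $\frac{1}{2\pi\sqrt{-1}}\oint_{C_0}dz$ denotes taking the residue at $z=0$, realized as the contour integral over $z(t)=r_1e^{2\pi\sqrt{-1}t}$, $0\le t\le 1$; $\frac{1}{2\pi\sqrt{-1}}\oint_{C_{\frac{z+\alpha}{2}}}dw$ denotes taking the residue at $w=\frac{z+\alpha}{2}$, realized as the contour integral over $w(t)=\frac{z+\alpha}{2}+r_2e^{2\pi\sqrt{-1}t}$, $0\le t\le1$; and $\frac{1}{2\pi\sqrt{-1}}\oint_{C_{\beta}}dw$ denotes taking the residue at $w=\beta$. Iterated residue integrals are performed from left to right, i.e. the $z$-integration is done first. *)

theory Defs
  imports "HOL-Complex_Analysis.Complex_Analysis"
begin

definition holomorphic2_on :: "(complex \<times> complex \<Rightarrow> complex) \<Rightarrow> (complex \<times> complex) set \<Rightarrow> bool" where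
  "holomorphic2_on g U \<longleftrightarrow>
     (\<forall>p\<in>U. \<exists>a b. (g has_derivative (\<lambda>(h, k). a * h + b * k)) (at p within U))"

definition Bset :: "complex \<Rightarrow> real \<Rightarrow> real \<Rightarrow> (complex \<times> complex) set" where
  "Bset \<alpha> r1 r2 = {(z, w). cmod z < 2 * r1 \<and> cmod (2 * w - z - \<alpha>) < 2 * r2}"

definition Icoef :: "(complex \<times> complex \<Rightarrow> complex) \<Rightarrow> complex \<Rightarrow> nat \<Rightarrow> complex" where
  "Icoef g \<alpha> j = residue (\<lambda>z. (1 / z) *
       residue (\<lambda>w. g (z, w) / (2 * w - z - \<alpha>) * ((w - z) / z) ^ j) ((z + \<alpha>) / 2)) 0"

end

theory Submission
  imports Defs
begin

(* With h(z) = g(z, (z + alpha)/2) the inner residue is simple, so I_j is the residue at 0 of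
   h(z)/(2z) * ((alpha - z)/(2z))^j.  On the circle |z| = r1 and for small eps the geometric
   series in eps (alpha - z)/(2z) converges uniformly; summing it under the integral leaves the
   Cauchy kernel h(z)/((2 + eps)(z - z_eps)) with z_eps = eps alpha/(2 + eps), so the generating
   function equals h(z_eps)/(2 + eps).  The residue on the right is simple too, at
   w_eps = (1 + eps) alpha/(2 + eps), and (eps w_eps/(1 + eps), w_eps) = (z_eps, (z_eps + alpha)/2),
   so it is h(z_eps) as well.  Analyticity at 0 holds because a convergent power series is
   holomorphic. *)

lemma holomorphic2_on_affine_line:
  assumes g: "holomorphic2_on g U" and U: "open U"
  shows "(\<lambda>x. g (c1*x + d1, c2*x + d2)) holomorphic_on {x. (c1*x + d1, c2*x + d2) \<in> U}"
  unfolding holomorphic_on_def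
proof
  fix x assume "x \<in> {x. (c1*x + d1, c2*x + d2) \<in> U}"
  then have p: "(c1*x + d1, c2*x + d2) \<in> U"
    by simp
  then obtain a b where "(g has_derivative (\<lambda>(h, k). a*h + b*k)) (at (c1*x + d1, c2*x + d2) within U)"
    using g unfolding holomorphic2_on_def by blast
  then have dg: "(g has_derivative (\<lambda>(h, k). a*h + b*k)) (at (c1*x + d1, c2*x + d2))"
    unfolding at_within_open[OF p U] .
  have "((\<lambda>x. (c1*x + d1, c2*x + d2)) has_derivative (\<lambda>x. (c1*x, c2*x))) (at x)"
    by (auto intro!: derivative_eq_intros)
  from diff_chain_at[OF this dg]
  have "((g \<circ> (\<lambda>x. (c1*x + d1, c2*x + d2))) has_derivative
      (\<lambda>(h, k). a*h + b*k) \<circ> (\<lambda>x. (c1*x, c2*x))) (at x)" .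
  moreover have "(\<lambda>(h, k). a*h + b*k) \<circ> (\<lambda>x. (c1*x, c2*x)) = (*) (a*c1 + b*c2)"
    by (auto simp: fun_eq_iff algebra_simps)
  ultimately have "((\<lambda>x. g (c1*x + d1, c2*x + d2)) has_field_derivative (a*c1 + b*c2)) (at x)"
    unfolding has_field_derivative_def o_def by simp
  then show "(\<lambda>x. g (c1*x + d1, c2*x + d2)) field_differentiable
      at x within {x. (c1*x + d1, c2*x + d2) \<in> U}"
    using field_differentiable_at_within field_differentiable_def by blast
qed

lemma open_affine_line_vimage:
  assumes "open U"
  shows "open {x::complex. (c1*x + d1, c2*x + d2) \<in> U}"
  using continuous_open_vimage[OF assms, of "\<lambda>x. (c1*x + d1, c2*x + d2)"]
  by (simp add: vimage_def continuous_intros)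

lemma residue_simple_on_line:
  assumes "open U" "holomorphic2_on g U" "(c*w0 + d, w0) \<in> U" "p holomorphic_on UNIV"
  shows "residue (\<lambda>w. g (c*w + d, w) * p w / (w - w0)) w0 = g (c*w0 + d, w0) * p w0"
proof -
  define S where "S = {w. (c*w + d, 1*w + 0) \<in> U}"
  have "open S" "w0 \<in> S"
    using assms(3) open_affine_line_vimage[OF assms(1), of c d 1 0] unfolding S_def by auto
  moreover have "(\<lambda>w. g (c*w + d, w) * p w) holomorphic_on S"
    using holomorphic2_on_affine_line[OF assms(2,1), of c d 1 0]
      holomorphic_on_subset[OF assms(4)]
    unfolding S_def by (auto intro!: holomorphic_intros)
  ultimately show ?thesis
    by (rule residue_simple)
qed

lemma diagonal_mem_Bset:
  assumes "0 < r2" "cmod z < 2*r1"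
  shows "(z, (z + \<alpha>)/2) \<in> Bset \<alpha> r1 r2"
  using assms by (simp add: Bset_def add_divide_distrib)

lemma holomorphic_on_diagonal:
  assumes "holomorphic2_on g U" "open U" "\<And>z. z \<in> S \<Longrightarrow> (z, (z + \<alpha>)/2) \<in> U"
  shows "(\<lambda>z. g (z, (z + \<alpha>)/2)) holomorphic_on S"
proof -
  have "S \<subseteq> {z. (1*z + 0, 1/2*z + \<alpha>/2) \<in> U}"
    using assms(3) by (auto simp: add_divide_distrib)
  from holomorphic_on_subset[OF holomorphic2_on_affine_line[OF assms(1,2)] this]
  show ?thesis
    by (simp add: add_divide_distrib)
qed

lemma Icoef_eq_residue_diagonal:
  assumes U: "open U" and g: "holomorphic2_on g U" and "0 < R"
    and diag: "\<And>z. cmod z < R \<Longrightarrow> (z, (z + \<alpha>)/2) \<in> U"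
  shows "Icoef g \<alpha> j = residue (\<lambda>z. g (z, (z + \<alpha>)/2) / (2*z) * ((\<alpha> - z)/(2*z))^j) 0"
  unfolding Icoef_def
proof (rule residue_cong)
  have "1/z * residue (\<lambda>w. g (z, w) / (2*w - z - \<alpha>) * ((w - z)/z)^j) ((z + \<alpha>)/2)
          = g (z, (z + \<alpha>)/2) / (2*z) * ((\<alpha> - z)/(2*z))^j"
    if "z \<in> ball 0 R" for z
  proof -
    have "g (z, w) / (2*w - z - \<alpha>) * ((w - z)/z)^j
            = g (0*w + z, w) * (((w - z)/z)^j / 2) / (w - (z + \<alpha>)/2)" for w
    proof -
      have "2*w - z - \<alpha> = 2 * (w - (z + \<alpha>)/2)"
        by (simp add: algebra_simps)
      then show ?thesis
        by (simp only:) simp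
    qed
    then have residue: "residue (\<lambda>w. g (z, w) / (2*w - z - \<alpha>) * ((w - z)/z)^j) ((z + \<alpha>)/2)
        = g (0*((z + \<alpha>)/2) + z, (z + \<alpha>)/2) * ((((z + \<alpha>)/2 - z)/z)^j / 2)"
      using diag that by (simp only:) (intro residue_simple_on_line[OF U g], auto intro!: holomorphic_intros)
    have "((z + \<alpha>)/2 - z)/z = (\<alpha> - z)/(2*z)"
      by (simp add: divide_simps)
    then show ?thesis
      unfolding residue by simp
  qed
  moreover have "\<forall>\<^sub>F z in at 0. z \<in> ball 0 R"
    using \<open>0 < R\<close> by (intro eventually_at_in_open') auto
  ultimately show "\<forall>\<^sub>F z in at 0. 1/z * residue (\<lambda>w. g (z, w) / (2*w - z - \<alpha>) * ((w - z)/z)^j) ((z + \<alpha>)/2)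
      = g (z, (z + \<alpha>)/2) / (2*z) * ((\<alpha> - z)/(2*z))^j"
    by (auto elim!: eventually_mono)
qed simp

lemma sums_contour_integrals_circlepath:
  fixes f :: "nat \<Rightarrow> complex \<Rightarrow> complex"
  assumes "0 < r"
    and integral: "\<And>j. (f j has_contour_integral I j) (circlepath z r)"
    and bound: "\<And>j x. x \<in> sphere z r \<Longrightarrow> norm (f j x) \<le> M j" and "summable M"
    and pointwise: "\<And>x. x \<in> sphere z r \<Longrightarrow> (\<lambda>j. f j x) sums F x"
    and F: "(F has_contour_integral J) (circlepath z r)"
  shows "I sums J"
proof -
  have "\<And>x. x \<in> sphere z r \<Longrightarrow> (\<Sum>j. f j x) = F x"
    by (rule sums_unique[OF pointwise, symmetric])
  from uniform_limit_cong'[THEN iffD1, OF refl this Weierstrass_m_test[OF bound \<open>summable M\<close>]]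
  have uniform: "uniform_limit (sphere z r) (\<lambda>n x. \<Sum>j<n. f j x) F sequentially" .
  have partial: "((\<lambda>x. \<Sum>j<n. f j x) has_contour_integral (\<Sum>j<n. I j)) (circlepath z r)" for n
    using integral by (rule has_contour_integral_sum[OF finite_lessThan])
  have "(\<lambda>n. contour_integral (circlepath z r) (\<lambda>x. \<Sum>j<n. f j x))
          \<longlonglongrightarrow> contour_integral (circlepath z r) F"
    using partial
    by (intro contour_integral_uniform_limit_circlepath(2)[OF always_eventually uniform _ \<open>0 < r\<close>])
      (auto intro: has_contour_integral_integrable)
  then show ?thesis
    unfolding sums_def contour_integral_unique[OF partial] contour_integral_unique[OF F] .
qed

lemma geometric_kernel_sums:
  fixes \<epsilon> \<alpha> z c :: complex
  assumes "z \<noteq> 0" "2 + \<epsilon> \<noteq> 0" "cmod (\<epsilon> * ((\<alpha> - z)/(2*z))) < 1"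
  shows "(\<lambda>j. c / (2*z) * ((\<alpha> - z)/(2*z))^j * \<epsilon>^j)
           sums (c / ((2 + \<epsilon>) * (z - \<epsilon>*\<alpha>/(2 + \<epsilon>))))"
proof -
  define q where "q = \<epsilon> * ((\<alpha> - z)/(2*z))"
  have "(\<lambda>j. c / (2*z) * q^j) sums (c / (2*z) * (1 / (1 - q)))"
    using geometric_sums[OF assms(3)[folded q_def]] by (rule sums_mult)
  moreover have "2*z * (1 - q) = (2 + \<epsilon>) * (z - \<epsilon>*\<alpha>/(2 + \<epsilon>))"
    using assms(1,2) by (simp add: q_def field_simps)
  moreover have "c / (2*z) * (1 / (1 - q)) = c / (2*z * (1 - q))"
    by simp
  moreover have "(\<lambda>j. c / (2*z) * ((\<alpha> - z)/(2*z))^j * \<epsilon>^j) = (\<lambda>j. c / (2*z) * q^j)"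
    unfolding q_def power_mult_distrib by (simp only: ac_simps)
  ultimately show ?thesis
    by (simp only:)
qed

lemma small_parameter:
  fixes \<epsilon> \<alpha> :: complex
  assumes "0 < \<rho>" "cmod \<epsilon> * (cmod \<alpha> + \<rho>) < \<rho>"
  shows "cmod \<epsilon> < 1" "cmod (\<epsilon>*\<alpha>/(2 + \<epsilon>)) < \<rho>"
proof -
  have "cmod \<epsilon> * \<rho> \<le> cmod \<epsilon> * (cmod \<alpha> + \<rho>)"
    by (simp add: mult_left_mono)
  with assms have "cmod \<epsilon> * \<rho> < \<rho>"
    by linarith
  then show "cmod \<epsilon> < 1"
    using assms(1) by simp
  then have "1 \<le> cmod (2 + \<epsilon>)"
    using norm_diff_ineq[of 2 \<epsilon>] by simp
  then have "cmod (\<epsilon>*\<alpha>/(2 + \<epsilon>)) \<le> cmod \<epsilon> * cmod \<alpha> / 1"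
    unfolding norm_divide norm_mult by (intro divide_left_mono) auto
  also have "\<dots> \<le> cmod \<epsilon> * (cmod \<alpha> + \<rho>)"
    using assms by (simp add: mult_left_mono)
  finally show "cmod (\<epsilon>*\<alpha>/(2 + \<epsilon>)) < \<rho>"
    using assms(2) by linarith
qed

lemma norm_geometric_ratio_on_circle:
  fixes \<epsilon> \<alpha> z :: complex
  assumes "0 < \<rho>" "cmod z = \<rho>" "cmod \<epsilon> * (cmod \<alpha> + \<rho>) < \<rho>"
  shows "cmod (\<epsilon> * ((\<alpha> - z)/(2*z))) \<le> 1/2"
proof -
  have "cmod (\<epsilon> * ((\<alpha> - z)/(2*z))) = cmod \<epsilon> * cmod (\<alpha> - z) / (2*\<rho>)"
    using assms(2) by (simp add: norm_mult norm_divide)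
  also have "\<dots> \<le> cmod \<epsilon> * (cmod \<alpha> + \<rho>) / (2*\<rho>)"
    using assms norm_triangle_ineq4[of \<alpha> z]
    by (intro divide_right_mono mult_left_mono) auto
  also have "\<dots> \<le> 1/2"
    using assms by (simp add: divide_le_eq)
  finally show ?thesis .
qed

lemma norm_geometric_term_on_circle:
  fixes \<epsilon> \<alpha> z c :: complex
  assumes "0 < \<rho>" "cmod z = \<rho>" "cmod \<epsilon> * (cmod \<alpha> + \<rho>) < \<rho>" "cmod c \<le> H"
  shows "cmod (c / (2*z) * ((\<alpha> - z)/(2*z))^j * \<epsilon>^j) \<le> H / (2*\<rho>) * (1/2)^j"
proof -
  have "c / (2*z) * ((\<alpha> - z)/(2*z))^j * \<epsilon>^j = c / (2*z) * (\<epsilon> * ((\<alpha> - z)/(2*z)))^j"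
    unfolding power_mult_distrib by (simp only: ac_simps)
  then have "cmod (c / (2*z) * ((\<alpha> - z)/(2*z))^j * \<epsilon>^j)
      = cmod c / (2*\<rho>) * cmod (\<epsilon> * ((\<alpha> - z)/(2*z))) ^ j"
    using assms(2) by (simp only: norm_mult norm_divide norm_power) simp
  also have "\<dots> \<le> H / (2*\<rho>) * (1/2)^j"
    using assms norm_geometric_ratio_on_circle[OF assms(1-3)] order_trans[OF norm_ge_zero assms(4)]
    by (intro mult_mono divide_right_mono power_mono) auto
  finally show ?thesis .
qed

lemma residue_generating_function_sums:
  fixes h :: "complex \<Rightarrow> complex" and \<alpha> \<epsilon> :: complex
  assumes h: "h holomorphic_on ball 0 R" and "0 < \<rho>" "\<rho> < R"
    and small: "cmod \<epsilon> * (cmod \<alpha> + \<rho>) < \<rho>"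
  shows "(\<lambda>j. residue (\<lambda>z. h z / (2*z) * ((\<alpha> - z)/(2*z))^j) 0 * \<epsilon>^j)
           sums (h (\<epsilon>*\<alpha>/(2 + \<epsilon>)) / (2 + \<epsilon>))"
proof -
  define z\<^sub>\<epsilon> where "z\<^sub>\<epsilon> = \<epsilon>*\<alpha>/(2 + \<epsilon>)"
  define f where "f j z = h z / (2*z) * ((\<alpha> - z)/(2*z))^j * \<epsilon>^j" for j z
  have "2 + \<epsilon> \<noteq> 0" "cmod z\<^sub>\<epsilon> < \<rho>"
    using small_parameter[OF \<open>0 < \<rho>\<close> small] by (auto simp: add_eq_0_iff z\<^sub>\<epsilon>_def)
  have sphere: "sphere 0 \<rho> \<subseteq> ball 0 R" "cball 0 \<rho> \<subseteq> ball 0 R"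
    using \<open>\<rho> < R\<close> by auto
  have ratio: "cmod (\<epsilon> * ((\<alpha> - z)/(2*z))) \<le> 1/2" if "z \<in> sphere 0 \<rho>" for z
    using that by (intro norm_geometric_ratio_on_circle[OF \<open>0 < \<rho>\<close> _ small]) simp
  obtain H where H: "\<And>z. z \<in> sphere 0 \<rho> \<Longrightarrow> cmod (h z) \<le> H"
    using compact_imp_bounded[OF compact_continuous_image[OF
        holomorphic_on_imp_continuous_on[OF holomorphic_on_subset[OF h sphere(1)]] compact_sphere]]
    unfolding bounded_iff by blast
  have integral: "(f j has_contour_integral
      2 * pi * \<i> * (residue (\<lambda>z. h z / (2*z) * ((\<alpha> - z)/(2*z))^j) 0 * \<epsilon>^j)) (circlepath 0 \<rho>)"
    for j
    unfolding f_def mult.assoc[symmetric, of "2 * pi * \<i>"]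
    using \<open>0 < \<rho>\<close> \<open>\<rho> < R\<close> sphere(2) holomorphic_on_subset[OF h, of "ball 0 R - {0}"]
    by (intro has_contour_integral_rmul base_residue[of "ball 0 R"]) (auto intro!: holomorphic_intros)
  have bound: "cmod (f j z) \<le> H / (2*\<rho>) * (1/2)^j" if "z \<in> sphere 0 \<rho>" for j z
    unfolding f_def using that H[OF that]
    by (intro norm_geometric_term_on_circle[OF \<open>0 < \<rho>\<close> _ small]) auto
  have pointwise: "(\<lambda>j. f j z) sums (1 / (2 + \<epsilon>) * (h z / (z - z\<^sub>\<epsilon>)))" if "z \<in> sphere 0 \<rho>" for z
    using geometric_kernel_sums[of z \<epsilon> \<alpha> "h z"] that ratio[OF that] \<open>0 < \<rho>\<close> \<open>2 + \<epsilon> \<noteq> 0\<close>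
    by (auto simp: f_def z\<^sub>\<epsilon>_def)
  from \<open>cmod z\<^sub>\<epsilon> < \<rho>\<close> have "((\<lambda>z. h z / (z - z\<^sub>\<epsilon>)) has_contour_integral 2 * of_real pi * \<i> * h z\<^sub>\<epsilon>) (circlepath 0 \<rho>)"
    by (intro Cauchy_integral_circlepath_simple holomorphic_on_subset[OF h sphere(2)]) simp
  from has_contour_integral_lmul[OF this, of "1 / (2 + \<epsilon>)"]
  have cauchy: "((\<lambda>z. 1 / (2 + \<epsilon>) * (h z / (z - z\<^sub>\<epsilon>))) has_contour_integral
      2 * pi * \<i> * (h z\<^sub>\<epsilon> / (2 + \<epsilon>))) (circlepath 0 \<rho>)"
    by (simp add: mult.commute mult.left_commute)
  have "summable (\<lambda>j. H / (2*\<rho>) * (1/2)^j)"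
    by (intro summable_mult summable_geometric) simp
  note series = sums_contour_integrals_circlepath[OF \<open>0 < \<rho>\<close> integral bound this pointwise cauchy]
  have "2 * pi * \<i> \<noteq> 0"
    by simp
  from iffD1[OF sums_mult_iff[OF this] series] show ?thesis
    by (simp only: z\<^sub>\<epsilon>_def)
qed

lemma Icoef_generating_function_sums:
  assumes U: "open U" and g: "holomorphic2_on g U" and "0 < \<rho>"
    and diag: "\<And>z. cmod z < 2*\<rho> \<Longrightarrow> (z, (z + \<alpha>)/2) \<in> U"
    and small: "cmod \<epsilon> * (cmod \<alpha> + \<rho>) < \<rho>"
  shows "(\<lambda>j. Icoef g \<alpha> j * \<epsilon>^j)
           sums (1 / (2 + \<epsilon>) * g (\<epsilon>*\<alpha>/(2 + \<epsilon>), (\<epsilon>*\<alpha>/(2 + \<epsilon>) + \<alpha>)/2))"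
proof -
  have "0 < 2*\<rho>"
    using \<open>0 < \<rho>\<close> by simp
  have "(\<lambda>z. g (z, (z + \<alpha>)/2)) holomorphic_on ball 0 (2*\<rho>)"
    using diag by (intro holomorphic_on_diagonal[OF g U]) auto
  from residue_generating_function_sums[OF this \<open>0 < \<rho>\<close> _ small] \<open>0 < \<rho>\<close>
  have "(\<lambda>j. residue (\<lambda>z. g (z, (z + \<alpha>)/2) / (2*z) * ((\<alpha> - z)/(2*z))^j) 0 * \<epsilon>^j)
          sums (1 / (2 + \<epsilon>) * g (\<epsilon>*\<alpha>/(2 + \<epsilon>), (\<epsilon>*\<alpha>/(2 + \<epsilon>) + \<alpha>)/2))"
    by simp
  moreover have "Icoef g \<alpha> j = residue (\<lambda>z. g (z, (z + \<alpha>)/2) / (2*z) * ((\<alpha> - z)/(2*z))^j) 0" for j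
    by (rule Icoef_eq_residue_diagonal[OF U g \<open>0 < 2*\<rho>\<close>]) (simp add: diag)
  ultimately show ?thesis
    by simp
qed

lemma residue_at_shifted_point:
  assumes U: "open U" and g: "holomorphic2_on g U" and "cmod \<epsilon> < 1"
    and in_U: "(\<epsilon>*\<alpha>/(2 + \<epsilon>), (\<epsilon>*\<alpha>/(2 + \<epsilon>) + \<alpha>)/2) \<in> U"
  shows "residue (\<lambda>w. g (\<epsilon>/(1 + \<epsilon>) * w, w) / (w - (1 + \<epsilon>)/(2 + \<epsilon>) * \<alpha>))
           ((1 + \<epsilon>)/(2 + \<epsilon>) * \<alpha>)
         = g (\<epsilon>*\<alpha>/(2 + \<epsilon>), (\<epsilon>*\<alpha>/(2 + \<epsilon>) + \<alpha>)/2)"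
proof -
  define w\<^sub>\<epsilon> where "w\<^sub>\<epsilon> = (1 + \<epsilon>)/(2 + \<epsilon>) * \<alpha>"
  have "1 + \<epsilon> \<noteq> 0" "2 + \<epsilon> \<noteq> 0"
    using \<open>cmod \<epsilon> < 1\<close> by (auto simp: add_eq_0_iff)
  moreover have "\<epsilon>*\<alpha>/(2 + \<epsilon>) + \<alpha> = 2 * w\<^sub>\<epsilon>"
    using \<open>2 + \<epsilon> \<noteq> 0\<close> by (simp add: w\<^sub>\<epsilon>_def field_simps)
  ultimately have point: "\<epsilon>/(1 + \<epsilon>) * w\<^sub>\<epsilon> + 0 = \<epsilon>*\<alpha>/(2 + \<epsilon>)" "w\<^sub>\<epsilon> = (\<epsilon>*\<alpha>/(2 + \<epsilon>) + \<alpha>)/2"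
    by (simp add: w\<^sub>\<epsilon>_def, simp)
  have "residue (\<lambda>w. g (\<epsilon>/(1 + \<epsilon>) * w + 0, w) * 1 / (w - w\<^sub>\<epsilon>)) w\<^sub>\<epsilon>
      = g (\<epsilon>/(1 + \<epsilon>) * w\<^sub>\<epsilon> + 0, w\<^sub>\<epsilon>) * 1"
    using in_U unfolding point(2)[symmetric] unfolding point(1)[symmetric]
    by (rule residue_simple_on_line[OF U g _ holomorphic_on_const])
  also have "\<dots> = g (\<epsilon>*\<alpha>/(2 + \<epsilon>), (\<epsilon>*\<alpha>/(2 + \<epsilon>) + \<alpha>)/2)"
    unfolding point(1) point(2)[symmetric] by simp
  finally show ?thesis
    by (simp add: w\<^sub>\<epsilon>_def)
qed

theorem lemma1:
  fixes \<alpha> :: complex and r1 r2 :: real and g :: "complex \<times> complex \<Rightarrow> complex"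
    and U :: "(complex \<times> complex) set"
  assumes "0 < r1" "0 < r2" "r1 < 2 * r2 - r1"
    and "open U" "Bset \<alpha> r1 r2 \<subseteq> U" "holomorphic2_on g U"
  shows "\<exists>r>0.
     (\<forall>\<epsilon>. cmod \<epsilon> < r \<longrightarrow>
        (\<lambda>j. Icoef g \<alpha> j * \<epsilon> ^ j) sums
          (1 / (2 + \<epsilon>) *
            residue (\<lambda>w. g (\<epsilon> / (1 + \<epsilon>) * w, w) / (w - (1 + \<epsilon>) / (2 + \<epsilon>) * \<alpha>))
                    ((1 + \<epsilon>) / (2 + \<epsilon>) * \<alpha>)))
     \<and> (\<lambda>\<epsilon>. \<Sum>j. Icoef g \<alpha> j * \<epsilon> ^ j) analytic_on {0}"
proof -
  have diag: "(z, (z + \<alpha>)/2) \<in> U" if "cmod z < 2*r1" for z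
    using diagonal_mem_Bset[OF \<open>0 < r2\<close> that] \<open>Bset \<alpha> r1 r2 \<subseteq> U\<close> by blast
  define r where "r = r1 / (cmod \<alpha> + r1)"
  have "0 < r"
    using \<open>0 < r1\<close> by (simp add: r_def add_nonneg_pos)
  have series: "(\<lambda>j. Icoef g \<alpha> j * \<epsilon>^j) sums (1 / (2 + \<epsilon>) *
      residue (\<lambda>w. g (\<epsilon> / (1 + \<epsilon>) * w, w) / (w - (1 + \<epsilon>) / (2 + \<epsilon>) * \<alpha>))
              ((1 + \<epsilon>) / (2 + \<epsilon>) * \<alpha>))" if "cmod \<epsilon> < r" for \<epsilon>
  proof -
    have small: "cmod \<epsilon> * (cmod \<alpha> + r1) < r1"
      using that \<open>0 < r1\<close> by (simp add: r_def pos_less_divide_eq add_nonneg_pos)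
    note shifted = small_parameter[OF \<open>0 < r1\<close> small]
    have "(\<epsilon>*\<alpha>/(2 + \<epsilon>), (\<epsilon>*\<alpha>/(2 + \<epsilon>) + \<alpha>)/2) \<in> U"
      using shifted(2) \<open>0 < r1\<close> by (intro diag) simp
    note residue = residue_at_shifted_point[OF \<open>open U\<close> \<open>holomorphic2_on g U\<close> shifted(1) this]
    show ?thesis
      unfolding residue using \<open>open U\<close> \<open>holomorphic2_on g U\<close> \<open>0 < r1\<close> small
      by (intro Icoef_generating_function_sums) (auto intro: diag)
  qed
  have "(\<lambda>\<epsilon>. \<Sum>j. Icoef g \<alpha> j * \<epsilon>^j) holomorphic_on ball 0 r"
    using series by (intro power_series_holomorphic[where a = "Icoef g \<alpha>"])
      (auto intro: summable_sums sums_summable)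
  then show ?thesis
    using \<open>0 < r\<close> series unfolding analytic_on_def by (intro exI[of _ r] conjI allI impI) auto
qed

end
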